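(* Let $X_o$ be a compact Hausdorff space, $\theta$ a homeomorphism of $X_o$ such that $(X_o,\theta)$ is uniquely ergodic with invariant measure $\mu_o$, $f\in C(X_o;\mathbb{T})$, and $\Phi_{\theta,f}(x,w):=(\theta(x),f(x)w)$ acting on $C(X_o\times\mathbb{T})$ by $h\mapsto h\circ\Phi_{\theta,f}$. Suppose $(C(X_o\times\mathbb{T}),\Phi_{\theta,f})$ is uniquely ergodic with respect to the fixed-point subalgebra and that $C(X_o\times\mathbb{T})^{\Phi_{\theta,f}}\ne\mathbb{C}1$; let $\rho:C(X_o\times\mathbb{T})^{\Phi_{\theta,f}}\to C(\mathbb{T})$ be a $*$-isomorphism, and $E^{\Phi_{\theta,f}}$ the unique $\Phi_{\theta,f}$-invariant conditional expectation of $C(X_o\times\mathbb{T})$ onto $C(X_o\times\mathbb{T})^{\Phi_{\theta,f}}$. Then the map $T(\mu):=\mu\circ\rho\circ E^{\Phi_{\theta,f}}$ is an affine bijection from the set $\mathcal{P}(\mathbb{T})$ of regular Borel probability measures on $\mathbb{T}$ (viewed as states on $C(\mathbb{T})$) onto the set of $\Phi_{\theta,f}$-invariant regular Borel probability measures on $X_o\times\mathbb{T}$.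
   Context: A system $(\mathfrak{B},\beta)$ is uniquely ergodic with respect to the fixed-point subalgebra if the Ces\`aro averages $\frac1n\sum_{k=0}^{n-1}\beta^k(x)$ converge in norm for every $x\in\mathfrak{B}$; equivalently every state on $\mathfrak{B}^\beta$ has a unique $\beta$-invariant state extension to $\mathfrak{B}$; in this case the limit defines a $\beta$-invariant conditional expectation onto $\mathfrak{B}^\beta$. Under the hypotheses, the fixed-point subalgebra is $*$-isomorphic to $C(\mathbb{T})$. Measures are identified with states via the Riesz–Markov theorem. *)

theory Defs
  imports "HOL-Analysis.Analysis"
begin

text \<open>C(S): continuous complex functions on S, made canonical by requiring them
  to vanish outside S (so that C(S) is a genuine set of functions).\<close>
definition Cfun :: "'a::topological_space set \<Rightarrow> ('a \<Rightarrow> complex) set" where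
  "Cfun S = {h. continuous_on S h \<and> (\<forall>x. x \<notin> S \<longrightarrow> h x = 0)}"

definition unitS :: "'a set \<Rightarrow> 'a \<Rightarrow> complex" where
  "unitS S = (\<lambda>x. if x \<in> S then 1 else 0)"

text \<open>States on C(S) (= regular Borel probability measures on S by Riesz-Markov);
  canonically extended by 0 off C(S).\<close>
definition is_state :: "'a::topological_space set \<Rightarrow> (('a \<Rightarrow> complex) \<Rightarrow> complex) \<Rightarrow> bool" where
  "is_state S \<phi> \<longleftrightarrow>
     (\<forall>h. h \<notin> Cfun S \<longrightarrow> \<phi> h = 0) \<and>
     (\<forall>h\<in>Cfun S. \<forall>g\<in>Cfun S. \<phi> (\<lambda>x. h x + g x) = \<phi> h + \<phi> g) \<and>
     (\<forall>c. \<forall>h\<in>Cfun S. \<phi> (\<lambda>x. c * h x) = c * \<phi> h) \<and>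
     (\<forall>h\<in>Cfun S. (\<forall>x\<in>S. Im (h x) = 0 \<and> Re (h x) \<ge> 0) \<longrightarrow> Im (\<phi> h) = 0 \<and> Re (\<phi> h) \<ge> 0) \<and>
     \<phi> (unitS S) = 1"

definition koop :: "'a set \<Rightarrow> ('a \<Rightarrow> 'a) \<Rightarrow> ('a \<Rightarrow> complex) \<Rightarrow> 'a \<Rightarrow> complex" where
  "koop S \<Phi> h = (\<lambda>x. if x \<in> S then h (\<Phi> x) else 0)"

definition invariant_state :: "'a::topological_space set \<Rightarrow> ('a \<Rightarrow> 'a) \<Rightarrow> (('a \<Rightarrow> complex) \<Rightarrow> complex) \<Rightarrow> bool" where
  "invariant_state S \<Phi> \<phi> \<longleftrightarrow> is_state S \<phi> \<and> (\<forall>h\<in>Cfun S. \<phi> (koop S \<Phi> h) = \<phi> h)"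

definition uniquely_ergodic :: "'a::topological_space set \<Rightarrow> ('a \<Rightarrow> 'a) \<Rightarrow> bool" where
  "uniquely_ergodic S \<Phi> \<longleftrightarrow> (\<exists>!\<phi>. invariant_state S \<Phi> \<phi>)"

definition fixed_alg :: "'a::topological_space set \<Rightarrow> ('a \<Rightarrow> 'a) \<Rightarrow> ('a \<Rightarrow> complex) set" where
  "fixed_alg S \<Phi> = {h \<in> Cfun S. \<forall>x\<in>S. h (\<Phi> x) = h x}"

definition cesaro :: "'a set \<Rightarrow> ('a \<Rightarrow> 'a) \<Rightarrow> nat \<Rightarrow> ('a \<Rightarrow> complex) \<Rightarrow> 'a \<Rightarrow> complex" where
  "cesaro S \<Phi> n h = (\<lambda>x. if x \<in> S then (\<Sum>k<n. h ((\<Phi> ^^ k) x)) / of_nat n else 0)"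

definition UE_fixed :: "'a::topological_space set \<Rightarrow> ('a \<Rightarrow> 'a) \<Rightarrow> bool" where
  "UE_fixed S \<Phi> \<longleftrightarrow> (\<forall>h\<in>Cfun S. \<exists>g. uniform_limit S (\<lambda>n. cesaro S \<Phi> n h) g sequentially)"

definition cond_exp :: "'a::topological_space set \<Rightarrow> ('a \<Rightarrow> 'a) \<Rightarrow> ('a \<Rightarrow> complex) \<Rightarrow> 'a \<Rightarrow> complex" where
  "cond_exp S \<Phi> h = (THE g. g \<in> Cfun S \<and> uniform_limit S (\<lambda>n. cesaro S \<Phi> n h) g sequentially)"

definition star_iso :: "('a \<Rightarrow> complex) set \<Rightarrow> ('b \<Rightarrow> complex) set \<Rightarrow> (('a \<Rightarrow> complex) \<Rightarrow> ('b \<Rightarrow> complex)) \<Rightarrow> bool" where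
  "star_iso A B \<rho> \<longleftrightarrow> bij_betw \<rho> A B \<and>
     (\<forall>h\<in>A. \<forall>g\<in>A. \<rho> (\<lambda>x. h x + g x) = (\<lambda>y. \<rho> h y + \<rho> g y)) \<and>
     (\<forall>c. \<forall>h\<in>A. \<rho> (\<lambda>x. c * h x) = (\<lambda>y. c * \<rho> h y)) \<and>
     (\<forall>h\<in>A. \<forall>g\<in>A. \<rho> (\<lambda>x. h x * g x) = (\<lambda>y. \<rho> h y * \<rho> g y)) \<and>
     (\<forall>h\<in>A. \<rho> (\<lambda>x. cnj (h x)) = (\<lambda>y. cnj (\<rho> h y)))"

definition affine_states :: "((('a \<Rightarrow> complex) \<Rightarrow> complex) set) \<Rightarrow> ((('a \<Rightarrow> complex) \<Rightarrow> complex) \<Rightarrow> (('b \<Rightarrow> complex) \<Rightarrow> complex)) \<Rightarrow> bool" where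
  "affine_states P T \<longleftrightarrow> (\<forall>\<mu>\<in>P. \<forall>\<nu>\<in>P. \<forall>t::real. 0 \<le> t \<and> t \<le> 1 \<longrightarrow>
      T (\<lambda>h. of_real t * \<mu> h + of_real (1 - t) * \<nu> h) = (\<lambda>h. of_real t * T \<mu> h + of_real (1 - t) * T \<nu> h))"

end

theory Submission
  imports Defs
begin

text \<open>The Cesaro limit E = cond_exp is a positive unital projection of C(S) onto the fixed-point
  algebra which is invariant under the Koopman operator, and every invariant state \<phi> satisfies
  \<phi> \<circ> E = \<phi> (apply \<phi> to the Cesaro averages and pass to the norm limit). Hence the invariant
  states are exactly the states of the fixed-point algebra composed with E. A *-isomorphism
  and its inverse preserve positivity (positive elements are squares of real ones) and the unit,
  so states of the fixed-point algebra correspond bijectively to states of C(T) via \<rho>.\<close>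

lemma Cfun_add: "h \<in> Cfun S \<Longrightarrow> g \<in> Cfun S \<Longrightarrow> (\<lambda>x. h x + g x) \<in> Cfun S"
  by (auto simp: Cfun_def intro: continuous_on_add)

lemma Cfun_cmult: "h \<in> Cfun S \<Longrightarrow> (\<lambda>x. c * h x) \<in> Cfun S"
  by (auto simp: Cfun_def intro: continuous_on_mult continuous_on_const)

lemma Cfun_mult: "h \<in> Cfun S \<Longrightarrow> g \<in> Cfun S \<Longrightarrow> (\<lambda>x. h x * g x) \<in> Cfun S"
  by (auto simp: Cfun_def intro: continuous_on_mult)

lemma Cfun_cnj: "h \<in> Cfun S \<Longrightarrow> (\<lambda>x. cnj (h x)) \<in> Cfun S"
  by (auto simp: Cfun_def intro: continuous_intros)

lemma Cfun_zero: "(\<lambda>x. 0) \<in> Cfun S"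
  by (auto simp: Cfun_def)

lemma Cfun_unitS: "unitS S \<in> Cfun S"
proof -
  have "continuous_on S (unitS S)"
    by (rule continuous_on_cong[THEN iffD1, OF refl _ continuous_on_const[of S 1]])
       (auto simp: unitS_def)
  then show ?thesis by (auto simp: Cfun_def unitS_def)
qed

lemma Cfun_Re: "h \<in> Cfun S \<Longrightarrow> (\<lambda>x. complex_of_real (Re (h x))) \<in> Cfun S"
  by (auto simp: Cfun_def intro!: continuous_intros)

lemma Cfun_Im: "h \<in> Cfun S \<Longrightarrow> (\<lambda>x. complex_of_real (Im (h x))) \<in> Cfun S"
  by (auto simp: Cfun_def intro!: continuous_intros)

lemma Cfun_sqrt_Re: "h \<in> Cfun S \<Longrightarrow> (\<lambda>x. complex_of_real (sqrt (Re (h x)))) \<in> Cfun S"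
  by (auto simp: Cfun_def intro!: continuous_intros)

lemma Cfun_compose:
  assumes "h \<in> Cfun S" "continuous_on S \<Psi>" "\<Psi> ` S \<subseteq> S"
  shows "(\<lambda>x. if x \<in> S then h (\<Psi> x) else 0) \<in> Cfun S"
proof -
  have "continuous_on S (\<lambda>x. h (\<Psi> x))"
    using assms by (intro continuous_on_compose2[of S h _ \<Psi>]) (auto simp: Cfun_def)
  then have "continuous_on S (\<lambda>x. if x \<in> S then h (\<Psi> x) else 0)"
    by (rule continuous_on_cong[THEN iffD1, rotated 2]) auto
  then show ?thesis by (auto simp: Cfun_def)
qed

lemma Cfun_bounded: "compact S \<Longrightarrow> h \<in> Cfun S \<Longrightarrow> \<exists>B\<ge>0. \<forall>x\<in>S. norm (h x) \<le> B"
proof -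
  assume "compact S" "h \<in> Cfun S"
  then have "bounded (h ` S)"
    by (intro compact_imp_bounded compact_continuous_image) (auto simp: Cfun_def)
  then obtain B where "\<forall>x\<in>S. norm (h x) \<le> B" by (auto simp: bounded_iff)
  then show ?thesis by (intro exI[of _ "max B 0"]) auto
qed

lemma Cfun_unique_uniform_limit:
  assumes "uniform_limit S F g1 sequentially" "uniform_limit S F g2 sequentially"
    and "g1 \<in> Cfun S" "g2 \<in> Cfun S"
  shows "g1 = g2"
proof
  fix x show "g1 x = g2 x"
  proof (cases "x \<in> S")
    case True
    show ?thesis
      using tendsto_uniform_limitI[OF assms(1) True] tendsto_uniform_limitI[OF assms(2) True]
      by (rule LIMSEQ_unique)
  next
    case False
    then show ?thesis using assms(3,4) by (auto simp: Cfun_def)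
  qed
qed

definition star_closed :: "('a \<Rightarrow> complex) set \<Rightarrow> bool" where
  "star_closed A \<longleftrightarrow>
     (\<forall>h\<in>A. \<forall>g\<in>A. (\<lambda>x. h x + g x) \<in> A \<and> (\<lambda>x. h x * g x) \<in> A) \<and>
     (\<forall>c. \<forall>h\<in>A. (\<lambda>x. c * h x) \<in> A) \<and> (\<forall>h\<in>A. (\<lambda>x. cnj (h x)) \<in> A)"

lemma star_closed_fixed_alg: "star_closed (fixed_alg S \<Phi>)"
  by (simp add: star_closed_def fixed_alg_def Cfun_add Cfun_mult Cfun_cmult Cfun_cnj)

lemma fixed_alg_sqrt_Re:
  "h \<in> fixed_alg S \<Phi> \<Longrightarrow> (\<lambda>x. complex_of_real (sqrt (Re (h x)))) \<in> fixed_alg S \<Phi>"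
  by (simp add: fixed_alg_def Cfun_sqrt_Re)

lemma star_iso_inv:
  assumes iso: "star_iso A B \<rho>" and closed: "star_closed A"
  shows "star_iso B A (inv_into A \<rho>)"
proof -
  have bij: "bij_betw \<rho> A B" using iso by (simp add: star_iso_def)
  let ?r = "inv_into A \<rho>"
  have r_in: "?r g \<in> A" and \<rho>_r: "\<rho> (?r g) = g" if "g \<in> B" for g
    using that bij by (auto simp: bij_betw_def inv_into_into f_inv_into_f)
  have r_eq: "?r g = k" if "k \<in> A" "\<rho> k = g" for g k
    using that bij by (auto simp: bij_betw_def intro: inv_into_f_eq)
  show ?thesis
    unfolding star_iso_def
  proof (intro conjI ballI allI)
    show "bij_betw ?r B A" by (rule bij_betw_inv_into[OF bij])
  next
    fix g1 g2 assume "g1 \<in> B" "g2 \<in> B"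
    then show "?r (\<lambda>y. g1 y + g2 y) = (\<lambda>x. ?r g1 x + ?r g2 x)"
      and "?r (\<lambda>y. g1 y * g2 y) = (\<lambda>x. ?r g1 x * ?r g2 x)"
      using iso closed r_in \<rho>_r by (auto intro!: r_eq simp: star_iso_def star_closed_def)
  next
    fix c g assume "g \<in> B"
    then show "?r (\<lambda>y. c * g y) = (\<lambda>x. c * ?r g x)"
      using iso closed r_in \<rho>_r by (auto intro!: r_eq simp: star_iso_def star_closed_def)
  next
    fix g assume "g \<in> B"
    then show "?r (\<lambda>y. cnj (g y)) = (\<lambda>x. cnj (?r g x))"
      using iso closed r_in \<rho>_r by (auto intro!: r_eq simp: star_iso_def star_closed_def)
  qed
qed

text \<open>A nonnegative h is k * k for the real function k = sqrt h; since k = cnj k, the image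
  \<rho> k is real too, so \<rho> h = \<rho> k * \<rho> k is nonnegative.\<close>
lemma star_iso_nonneg:
  assumes iso: "star_iso A B \<rho>" and h: "h \<in> A"
    and sqrt_in: "(\<lambda>x. complex_of_real (sqrt (Re (h x)))) \<in> A"
    and nonneg: "\<forall>x. Im (h x) = 0 \<and> 0 \<le> Re (h x)"
  shows "Im (\<rho> h y) = 0 \<and> 0 \<le> Re (\<rho> h y)"
proof -
  define k where "k = (\<lambda>x. complex_of_real (sqrt (Re (h x))))"
  have k: "k \<in> A" using sqrt_in by (simp add: k_def)
  have "h = (\<lambda>x. k x * k x)"
    using nonneg by (auto simp: k_def fun_eq_iff complex_eq_iff)
  then have \<rho>h: "\<rho> h = (\<lambda>y. \<rho> k y * \<rho> k y)"
    using iso k by (simp add: star_iso_def)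
  have "(\<lambda>x. cnj (k x)) = k" by (simp add: k_def fun_eq_iff)
  then have "\<rho> k = (\<lambda>y. cnj (\<rho> k y))"
    using iso k by (metis (no_types) star_iso_def)
  then have "Im (\<rho> k y) = - Im (\<rho> k y)"
    by (metis cnj.sel(2))
  then have "Im (\<rho> k y) = 0" by simp
  then show ?thesis by (simp add: \<rho>h)
qed

lemma star_iso_unitS:
  assumes iso: "star_iso A B \<rho>" and unit_A: "unitS S \<in> A" and A: "A \<subseteq> Cfun S"
    and unit_B: "unitS T \<in> B" and B: "B \<subseteq> Cfun T"
  shows "\<rho> (unitS S) = unitS T"
proof -
  have bij: "bij_betw \<rho> A B" using iso by (simp add: star_iso_def)
  obtain g where g: "g \<in> A" "\<rho> g = unitS T"
    using unit_B bij by (metis bij_betw_imp_surj_on imageE)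
  have "\<rho> (\<lambda>x. unitS S x * g x) = (\<lambda>y. \<rho> (unitS S) y * \<rho> g y)"
    using iso unit_A g(1) unfolding star_iso_def by blast
  moreover have "(\<lambda>x. unitS S x * g x) = g"
    using g(1) A by (auto simp: fun_eq_iff unitS_def Cfun_def)
  ultimately have "\<rho> (unitS S) y = 1" if "y \<in> T" for y
    using fun_cong[of _ _ y] that g(2) by (fastforce simp: unitS_def)
  moreover have "\<rho> (unitS S) \<in> Cfun T" using bij unit_A B by (auto simp: bij_betw_def)
  ultimately show ?thesis by (auto simp: fun_eq_iff unitS_def Cfun_def)
qed

lemma state_add:
  "is_state S \<phi> \<Longrightarrow> h \<in> Cfun S \<Longrightarrow> g \<in> Cfun S \<Longrightarrow> \<phi> (\<lambda>x. h x + g x) = \<phi> h + \<phi> g"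
  by (simp add: is_state_def)

lemma state_cmult: "is_state S \<phi> \<Longrightarrow> h \<in> Cfun S \<Longrightarrow> \<phi> (\<lambda>x. c * h x) = c * \<phi> h"
  by (simp add: is_state_def)

lemma state_nonneg:
  "is_state S \<phi> \<Longrightarrow> h \<in> Cfun S \<Longrightarrow> \<forall>x\<in>S. Im (h x) = 0 \<and> 0 \<le> Re (h x)
   \<Longrightarrow> Im (\<phi> h) = 0 \<and> 0 \<le> Re (\<phi> h)"
  by (simp add: is_state_def)

lemma state_unitS: "is_state S \<phi> \<Longrightarrow> \<phi> (unitS S) = 1"
  by (simp add: is_state_def)

lemma state_outside: "is_state S \<phi> \<Longrightarrow> h \<notin> Cfun S \<Longrightarrow> \<phi> h = 0"
  by (simp add: is_state_def)

lemma state_zero: "is_state S \<phi> \<Longrightarrow> \<phi> (\<lambda>x. 0) = 0"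
  using state_cmult[OF _ Cfun_unitS, of S \<phi> 0] by simp

lemma state_sum:
  fixes n :: nat
  assumes st: "is_state S \<phi>" and g: "\<And>k. k < n \<Longrightarrow> g k \<in> Cfun S"
  shows "(\<lambda>x. \<Sum>k<n. g k x) \<in> Cfun S \<and> \<phi> (\<lambda>x. \<Sum>k<n. g k x) = (\<Sum>k<n. \<phi> (g k))"
  using g
proof (induction n)
  case 0
  then show ?case using state_zero[OF st] Cfun_zero by simp
next
  case (Suc n)
  then have IH: "(\<lambda>x. \<Sum>k<n. g k x) \<in> Cfun S" "\<phi> (\<lambda>x. \<Sum>k<n. g k x) = (\<Sum>k<n. \<phi> (g k))"
    and gn: "g n \<in> Cfun S" by auto
  then show ?case using IH state_add[OF st IH(1) gn] Cfun_add[OF IH(1) gn] by simp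
qed

lemma state_real_bound:
  assumes st: "is_state S \<phi>" and a: "a \<in> Cfun S"
    and bound: "\<forall>x\<in>S. Im (a x) = 0 \<and> \<bar>Re (a x)\<bar> \<le> B"
  shows "Im (\<phi> a) = 0 \<and> \<bar>Re (\<phi> a)\<bar> \<le> B"
proof -
  define u where "u = (\<lambda>x. complex_of_real B * unitS S x)"
  have u: "u \<in> Cfun S" unfolding u_def by (rule Cfun_cmult[OF Cfun_unitS])
  have \<phi>u: "\<phi> u = B" using state_cmult[OF st Cfun_unitS] state_unitS[OF st] by (simp add: u_def)
  have ma: "(\<lambda>x. (-1) * a x) \<in> Cfun S" by (rule Cfun_cmult[OF a])
  have "\<phi> (\<lambda>x. u x + a x) = B + \<phi> a" "\<phi> (\<lambda>x. u x + (-1) * a x) = B - \<phi> a"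
    using state_add[OF st u a] state_add[OF st u ma] state_cmult[OF st a, of "-1"] \<phi>u by simp_all
  moreover have "Im (\<phi> (\<lambda>x. u x + a x)) = 0 \<and> 0 \<le> Re (\<phi> (\<lambda>x. u x + a x))"
    "Im (\<phi> (\<lambda>x. u x + (-1) * a x)) = 0 \<and> 0 \<le> Re (\<phi> (\<lambda>x. u x + (-1) * a x))"
    using bound by (intro state_nonneg[OF st] Cfun_add u a ma; auto simp: u_def unitS_def)+
  ultimately show ?thesis by auto
qed

lemma state_norm_bound:
  assumes st: "is_state S \<phi>" and k: "k \<in> Cfun S" and bound: "\<forall>x\<in>S. norm (k x) \<le> B"
  shows "norm (\<phi> k) \<le> 2 * B"
proof -
  define a where "a = (\<lambda>x. complex_of_real (Re (k x)))"
  define b where "b = (\<lambda>x. complex_of_real (Im (k x)))"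
  have a: "a \<in> Cfun S" and b: "b \<in> Cfun S"
    using Cfun_Re[OF k] Cfun_Im[OF k] by (auto simp: a_def b_def)
  have "k = (\<lambda>x. a x + \<i> * b x)" by (auto simp: a_def b_def complex_eq_iff)
  then have \<phi>k: "\<phi> k = \<phi> a + \<i> * \<phi> b"
    using state_add[OF st a Cfun_cmult[OF b]] state_cmult[OF st b] by simp
  have "\<forall>x\<in>S. Im (a x) = 0 \<and> \<bar>Re (a x)\<bar> \<le> B"
    using bound abs_Re_le_cmod by (auto simp: a_def intro: order_trans)
  then have ra: "Im (\<phi> a) = 0 \<and> \<bar>Re (\<phi> a)\<bar> \<le> B" by (rule state_real_bound[OF st a])
  have "\<forall>x\<in>S. Im (b x) = 0 \<and> \<bar>Re (b x)\<bar> \<le> B"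
    using bound abs_Im_le_cmod by (auto simp: b_def intro: order_trans)
  then have rb: "Im (\<phi> b) = 0 \<and> \<bar>Re (\<phi> b)\<bar> \<le> B" by (rule state_real_bound[OF st b])
  have "norm (\<phi> k) \<le> norm (\<phi> a) + norm (\<i> * \<phi> b)" unfolding \<phi>k by (rule norm_triangle_ineq)
  also have "\<dots> = \<bar>Re (\<phi> a)\<bar> + \<bar>Re (\<phi> b)\<bar>" using ra rb by (simp add: norm_mult cmod_eq_Re)
  finally show ?thesis using ra rb by linarith
qed

definition state_pullback ::
  "'a::topological_space set \<Rightarrow> (('a \<Rightarrow> complex) \<Rightarrow> ('b \<Rightarrow> complex))
     \<Rightarrow> (('b \<Rightarrow> complex) \<Rightarrow> complex) \<Rightarrow> ('a \<Rightarrow> complex) \<Rightarrow> complex" where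
  "state_pullback S P \<mu> = (\<lambda>h. if h \<in> Cfun S then \<mu> (P h) else 0)"

lemma is_state_pullback:
  assumes \<mu>: "is_state T \<mu>"
    and into: "\<And>h. h \<in> Cfun S \<Longrightarrow> P h \<in> Cfun T"
    and add: "\<And>h g. h \<in> Cfun S \<Longrightarrow> g \<in> Cfun S \<Longrightarrow> P (\<lambda>x. h x + g x) = (\<lambda>y. P h y + P g y)"
    and cmult: "\<And>c h. h \<in> Cfun S \<Longrightarrow> P (\<lambda>x. c * h x) = (\<lambda>y. c * P h y)"
    and nonneg: "\<And>h y. h \<in> Cfun S \<Longrightarrow> \<forall>x\<in>S. Im (h x) = 0 \<and> 0 \<le> Re (h x) \<Longrightarrow> y \<in> T
                   \<Longrightarrow> Im (P h y) = 0 \<and> 0 \<le> Re (P h y)"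
    and unit: "P (unitS S) = unitS T"
  shows "is_state S (state_pullback S P \<mu>)"
  using \<mu> into Cfun_unitS[of S] unfolding is_state_def state_pullback_def
  by (auto simp: add cmult nonneg Cfun_add Cfun_cmult unit)

locale ue_fixed_system =
  fixes S :: "'a::topological_space set" and \<Phi> :: "'a \<Rightarrow> 'a"
  assumes compact: "compact S" and continuous: "continuous_on S \<Phi>"
    and maps_to: "\<Phi> ` S \<subseteq> S" and ue_fixed: "UE_fixed S \<Phi>"
begin

lemma funpow_in: "x \<in> S \<Longrightarrow> (\<Phi> ^^ k) x \<in> S"
  using maps_to by (induction k) auto

lemma continuous_on_funpow: "continuous_on S (\<Phi> ^^ k)"
proof (induction k)
  case (Suc k)
  have "continuous_on S (\<Phi> \<circ> (\<Phi> ^^ k))"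
    using funpow_in by (intro continuous_on_compose[OF Suc] continuous_on_subset[OF continuous]) auto
  then show ?case by simp
qed simp

lemma unitS_fixed_alg: "unitS S \<in> fixed_alg S \<Phi>"
  using Cfun_unitS[of S] maps_to by (auto simp: fixed_alg_def unitS_def)

lemma koop_Cfun: "h \<in> Cfun S \<Longrightarrow> koop S \<Phi> h \<in> Cfun S"
  unfolding koop_def by (rule Cfun_compose[OF _ continuous maps_to])

lemma cesaro_Cfun:
  assumes h: "h \<in> Cfun S"
  shows "cesaro S \<Phi> n h \<in> Cfun S"
proof -
  have "continuous_on S (\<lambda>x. h ((\<Phi> ^^ k) x))" for k
    using h funpow_in by (intro continuous_on_compose2[OF _ continuous_on_funpow]) (auto simp: Cfun_def)
  then have "continuous_on S (\<lambda>x. (\<Sum>k<n. h ((\<Phi> ^^ k) x)) * inverse (of_nat n))"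
    by (intro continuous_intros)
  then have "continuous_on S (cesaro S \<Phi> n h)"
    by (rule continuous_on_cong[THEN iffD1, rotated 2]) (auto simp: cesaro_def divide_inverse)
  then show ?thesis by (auto simp: Cfun_def cesaro_def)
qed

lemma cond_exp_Cfun_limit:
  assumes h: "h \<in> Cfun S"
  shows "cond_exp S \<Phi> h \<in> Cfun S
         \<and> uniform_limit S (\<lambda>n. cesaro S \<Phi> n h) (cond_exp S \<Phi> h) sequentially"
proof -
  obtain g where g: "uniform_limit S (\<lambda>n. cesaro S \<Phi> n h) g sequentially"
    using ue_fixed h unfolding UE_fixed_def by blast
  define g' where "g' = (\<lambda>x. if x \<in> S then g x else 0)"
  have g': "uniform_limit S (\<lambda>n. cesaro S \<Phi> n h) g' sequentially"
    using g by (rule uniform_limit_cong'[THEN iffD1, rotated 2]) (auto simp: g'_def)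
  have "continuous_on S g'"
    by (rule uniform_limit_theorem[OF _ g']) (use cesaro_Cfun[OF h] in \<open>auto simp: Cfun_def\<close>)
  then have "g' \<in> Cfun S" by (auto simp: Cfun_def g'_def)
  show ?thesis
    unfolding cond_exp_def
    by (rule theI2[of _ g']) (use \<open>g' \<in> Cfun S\<close> g' Cfun_unique_uniform_limit in blast)+
qed

lemma cond_exp_Cfun: "h \<in> Cfun S \<Longrightarrow> cond_exp S \<Phi> h \<in> Cfun S"
  using cond_exp_Cfun_limit by blast

lemma cond_exp_limit:
  "h \<in> Cfun S \<Longrightarrow> uniform_limit S (\<lambda>n. cesaro S \<Phi> n h) (cond_exp S \<Phi> h) sequentially"
  using cond_exp_Cfun_limit by blast

lemma cond_exp_eqI:
  "h \<in> Cfun S \<Longrightarrow> g \<in> Cfun S \<Longrightarrow> uniform_limit S (\<lambda>n. cesaro S \<Phi> n h) g sequentially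
   \<Longrightarrow> cond_exp S \<Phi> h = g"
  using cond_exp_Cfun_limit Cfun_unique_uniform_limit by blast

lemma cond_exp_add:
  assumes "h \<in> Cfun S" "g \<in> Cfun S"
  shows "cond_exp S \<Phi> (\<lambda>x. h x + g x) = (\<lambda>x. cond_exp S \<Phi> h x + cond_exp S \<Phi> g x)"
proof -
  have "cesaro S \<Phi> n (\<lambda>x. h x + g x) = (\<lambda>x. cesaro S \<Phi> n h x + cesaro S \<Phi> n g x)" for n
    by (auto simp: cesaro_def sum.distrib add_divide_distrib)
  then show ?thesis
    using assms by (auto intro!: cond_exp_eqI Cfun_add cond_exp_Cfun uniform_limit_add cond_exp_limit)
qed

lemma cond_exp_cmult:
  assumes h: "h \<in> Cfun S"
  shows "cond_exp S \<Phi> (\<lambda>x. c * h x) = (\<lambda>x. c * cond_exp S \<Phi> h x)"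
proof -
  have "cesaro S \<Phi> n (\<lambda>x. c * h x) = (\<lambda>x. c * cesaro S \<Phi> n h x)" for n
    by (auto simp: cesaro_def sum_distrib_left)
  then show ?thesis
    using bounded_linear.uniform_limit[OF bounded_linear_mult_right cond_exp_limit[OF h], of c] h
    by (auto intro!: cond_exp_eqI Cfun_cmult cond_exp_Cfun)
qed

lemma fixed_alg_funpow: "h \<in> fixed_alg S \<Phi> \<Longrightarrow> x \<in> S \<Longrightarrow> h ((\<Phi> ^^ k) x) = h x"
  by (induction k) (auto simp: fixed_alg_def funpow_in)

lemma cond_exp_fixed_alg:
  assumes h: "h \<in> fixed_alg S \<Phi>"
  shows "cond_exp S \<Phi> h = h"
proof (rule cond_exp_eqI)
  show "h \<in> Cfun S" using h by (simp add: fixed_alg_def)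
  have "\<forall>n\<ge>1. \<forall>x\<in>S. cesaro S \<Phi> n h x = h x"
    by (auto simp: cesaro_def fixed_alg_funpow[OF h])
  then show "uniform_limit S (\<lambda>n. cesaro S \<Phi> n h) h sequentially"
    by (intro uniform_limitI) (auto simp: eventually_sequentially intro!: exI[of _ 1])
qed (use h in \<open>simp add: fixed_alg_def\<close>)

text \<open>The sums telescope: the Cesaro average of h \<circ> \<Phi> differs from that of h by
  (h \<circ> \<Phi>^n - h)/n, which tends to 0 uniformly because h is bounded.\<close>
lemma cesaro_koop:
  assumes x: "x \<in> S"
  shows "cesaro S \<Phi> n (koop S \<Phi> h) x = cesaro S \<Phi> n h x + (h ((\<Phi> ^^ n) x) - h x) / of_nat n"
proof -
  have "(\<Sum>k<n. koop S \<Phi> h ((\<Phi> ^^ k) x)) = (\<Sum>k<n. h ((\<Phi> ^^ k) x)) + h ((\<Phi> ^^ n) x) - h x"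
    by (induction n) (auto simp: koop_def funpow_in[OF x])
  then show ?thesis using x by (simp add: cesaro_def add_divide_distrib diff_divide_distrib)
qed

lemma cond_exp_koop:
  assumes h: "h \<in> Cfun S"
  shows "cond_exp S \<Phi> (koop S \<Phi> h) = cond_exp S \<Phi> h"
proof (rule cond_exp_eqI[OF koop_Cfun[OF h] cond_exp_Cfun[OF h]], rule uniform_limitI)
  fix e :: real assume e: "0 < e"
  obtain B where B: "\<forall>x\<in>S. norm (h x) \<le> B" using Cfun_bounded[OF compact h] by blast
  have "\<forall>\<^sub>F n in sequentially. \<forall>x\<in>S. dist (cesaro S \<Phi> n h x) (cond_exp S \<Phi> h x) < e/2"
    using uniform_limitD[OF cond_exp_limit[OF h], of "e/2"] e by simp
  moreover have "\<forall>\<^sub>F n in sequentially. (2 * B) / real n < e/2"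
    using e by (intro order_tendstoD(2)[OF lim_const_over_n]) auto
  ultimately show "\<forall>\<^sub>F n in sequentially.
      \<forall>x\<in>S. dist (cesaro S \<Phi> n (koop S \<Phi> h) x) (cond_exp S \<Phi> h x) < e"
  proof eventually_elim
    case (elim n)
    show ?case
    proof
      fix x assume x: "x \<in> S"
      have "norm (h ((\<Phi> ^^ n) x)) \<le> B" "norm (h x) \<le> B" using B x funpow_in[OF x] by auto
      then have "norm (h ((\<Phi> ^^ n) x) - h x) \<le> 2 * B"
        using norm_triangle_ineq4[of "h ((\<Phi> ^^ n) x)" "h x"] by linarith
      then have "norm ((h ((\<Phi> ^^ n) x) - h x) / of_nat n) \<le> 2 * B / real n"
        by (simp add: norm_divide divide_right_mono)
      moreover have "dist (cesaro S \<Phi> n (koop S \<Phi> h) x) (cond_exp S \<Phi> h x)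
          \<le> dist (cesaro S \<Phi> n h x) (cond_exp S \<Phi> h x) + norm ((h ((\<Phi> ^^ n) x) - h x) / of_nat n)"
        unfolding cesaro_koop[OF x] dist_norm
        by (metis add.commute add_diff_eq diff_diff_eq2 norm_triangle_ineq)
      ultimately show "dist (cesaro S \<Phi> n (koop S \<Phi> h) x) (cond_exp S \<Phi> h x) < e"
        using elim x by fastforce
    qed
  qed
qed

lemma cond_exp_fixed_alg_mem:
  assumes h: "h \<in> Cfun S"
  shows "cond_exp S \<Phi> h \<in> fixed_alg S \<Phi>"
proof -
  have "cond_exp S \<Phi> h (\<Phi> x) = cond_exp S \<Phi> h x" if x: "x \<in> S" for x
  proof -
    have "cesaro S \<Phi> n h (\<Phi> x) = cesaro S \<Phi> n (koop S \<Phi> h) x" for n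
      using x maps_to funpow_in[of x] by (auto simp: cesaro_def koop_def funpow_swap1 fun_eq_iff)
    moreover have "(\<lambda>n. cesaro S \<Phi> n h (\<Phi> x)) \<longlonglongrightarrow> cond_exp S \<Phi> h (\<Phi> x)"
      using x maps_to by (intro tendsto_uniform_limitI[OF cond_exp_limit[OF h]]) auto
    moreover have "(\<lambda>n. cesaro S \<Phi> n (koop S \<Phi> h) x) \<longlonglongrightarrow> cond_exp S \<Phi> h x"
      using tendsto_uniform_limitI[OF cond_exp_limit[OF koop_Cfun[OF h]] x] cond_exp_koop[OF h] by simp
    ultimately show ?thesis by (simp add: LIMSEQ_unique)
  qed
  then show ?thesis using cond_exp_Cfun[OF h] by (simp add: fixed_alg_def)
qed

lemma cond_exp_nonneg:
  assumes h: "h \<in> Cfun S" and nonneg: "\<forall>x\<in>S. Im (h x) = 0 \<and> 0 \<le> Re (h x)"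
  shows "Im (cond_exp S \<Phi> h x) = 0 \<and> 0 \<le> Re (cond_exp S \<Phi> h x)"
proof (cases "x \<in> S")
  case True
  have lim: "(\<lambda>n. cesaro S \<Phi> n h x) \<longlonglongrightarrow> cond_exp S \<Phi> h x"
    using tendsto_uniform_limitI[OF cond_exp_limit[OF h] True] .
  have "Im (cesaro S \<Phi> n h x) = 0" "0 \<le> Re (cesaro S \<Phi> n h x)" for n
    using nonneg True funpow_in[OF True]
    by (auto simp: cesaro_def intro!: sum_nonneg divide_nonneg_nonneg)
  with tendsto_Im[OF lim] tendsto_Re[OF lim] show ?thesis
    by (auto intro: LIMSEQ_le_const simp: LIMSEQ_const_iff)
next
  case False
  then show ?thesis using cond_exp_Cfun[OF h] by (simp add: Cfun_def)
qed

lemma invariant_state_cesaro: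
  assumes inv: "invariant_state S \<Phi> \<phi>" and h: "h \<in> Cfun S" and n: "n > 0"
  shows "\<phi> (cesaro S \<Phi> n h) = \<phi> h"
proof -
  have st: "is_state S \<phi>" using inv by (simp add: invariant_state_def)
  define h\<^sub>k where "h\<^sub>k k = (\<lambda>x. if x \<in> S then h ((\<Phi> ^^ k) x) else 0)" for k
  have iter: "h\<^sub>k k \<in> Cfun S \<and> \<phi> (h\<^sub>k k) = \<phi> h" for k
  proof (induction k)
    case 0
    have "h\<^sub>k 0 = h" using h by (auto simp: h\<^sub>k_def Cfun_def)
    then show ?case using h by simp
  next
    case (Suc k)
    have "h\<^sub>k (Suc k) = koop S \<Phi> (h\<^sub>k k)"
      using maps_to by (auto simp: h\<^sub>k_def koop_def funpow_swap1 fun_eq_iff)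
    then show ?case using Suc koop_Cfun inv by (auto simp: invariant_state_def)
  qed
  have "cesaro S \<Phi> n h = (\<lambda>x. (1 / of_nat n) * (\<Sum>k<n. h\<^sub>k k x))"
    by (auto simp: cesaro_def h\<^sub>k_def)
  moreover have sum: "(\<lambda>x. \<Sum>k<n. h\<^sub>k k x) \<in> Cfun S"
    "\<phi> (\<lambda>x. \<Sum>k<n. h\<^sub>k k x) = (\<Sum>k<n. \<phi> (h\<^sub>k k))"
    using state_sum[OF st, of n h\<^sub>k] iter by blast+
  ultimately show ?thesis
    using state_cmult[OF st sum(1), of "1 / of_nat n"] iter n by simp
qed

text \<open>Both sides differ by \<phi> applied to E h minus a Cesaro average, which is uniformly
  small; states are bounded, so the difference is below every positive bound.\<close>
lemma invariant_state_cond_exp: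
  assumes inv: "invariant_state S \<Phi> \<phi>" and h: "h \<in> Cfun S"
  shows "\<phi> (cond_exp S \<Phi> h) = \<phi> h"
proof -
  have st: "is_state S \<phi>" using inv by (simp add: invariant_state_def)
  have small: "norm (\<phi> (cond_exp S \<Phi> h) - \<phi> h) \<le> 2 * e" if e: "e > 0" for e
  proof -
    obtain N where N: "\<forall>n\<ge>N. \<forall>x\<in>S. dist (cesaro S \<Phi> n h x) (cond_exp S \<Phi> h x) < e"
      using uniform_limitD[OF cond_exp_limit[OF h] e] unfolding eventually_sequentially by blast
    define c where "c = cesaro S \<Phi> (Suc N) h"
    define D where "D = (\<lambda>x. cond_exp S \<Phi> h x + (-1) * c x)"
    have c: "c \<in> Cfun S" unfolding c_def by (rule cesaro_Cfun[OF h])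
    have D: "D \<in> Cfun S" unfolding D_def by (intro Cfun_add Cfun_cmult cond_exp_Cfun h c)
    have "\<phi> D = \<phi> (cond_exp S \<Phi> h) - \<phi> h"
      using state_add[OF st cond_exp_Cfun[OF h] Cfun_cmult[OF c, of "-1"]] state_cmult[OF st c, of "-1"]
        invariant_state_cesaro[OF inv h] by (simp add: D_def c_def)
    moreover have "\<forall>x\<in>S. norm (D x) \<le> e"
      using N by (auto simp: D_def c_def dist_norm norm_minus_commute less_imp_le)
    ultimately show ?thesis using state_norm_bound[OF st D] by simp
  qed
  have "norm (\<phi> (cond_exp S \<Phi> h) - \<phi> h) = 0"
    using small[of "norm (\<phi> (cond_exp S \<Phi> h) - \<phi> h) / 4"] by (cases "\<phi> (cond_exp S \<Phi> h) = \<phi> h") auto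
  then show ?thesis by simp
qed

end

locale ue_fixed_iso = ue_fixed_system S \<Phi> for S :: "'a::topological_space set" and \<Phi> +
  fixes T :: "'b::topological_space set" and \<rho> :: "('a \<Rightarrow> complex) \<Rightarrow> 'b \<Rightarrow> complex"
  assumes iso: "star_iso (fixed_alg S \<Phi>) (Cfun T) \<rho>"
begin

abbreviation \<rho>_inv :: "('b \<Rightarrow> complex) \<Rightarrow> 'a \<Rightarrow> complex" where
  "\<rho>_inv \<equiv> inv_into (fixed_alg S \<Phi>) \<rho>"

lemma \<rho>_inv_mem: "g \<in> Cfun T \<Longrightarrow> \<rho>_inv g \<in> fixed_alg S \<Phi>"
  using iso by (auto simp: star_iso_def bij_betw_def inv_into_into)

lemma \<rho>_\<rho>_inv: "g \<in> Cfun T \<Longrightarrow> \<rho> (\<rho>_inv g) = g"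
  using iso by (auto simp: star_iso_def bij_betw_def f_inv_into_f)

lemma \<rho>_inv_\<rho>: "h \<in> fixed_alg S \<Phi> \<Longrightarrow> \<rho>_inv (\<rho> h) = h"
  using iso by (auto simp: star_iso_def bij_betw_def)

lemma iso_inv: "star_iso (Cfun T) (fixed_alg S \<Phi>) \<rho>_inv"
  by (rule star_iso_inv[OF iso star_closed_fixed_alg])

lemma \<rho>_unitS: "\<rho> (unitS S) = unitS T"
  by (rule star_iso_unitS[OF iso unitS_fixed_alg _ Cfun_unitS]) (auto simp: fixed_alg_def)

lemma \<rho>_inv_unitS: "\<rho>_inv (unitS T) = unitS S"
  by (rule star_iso_unitS[OF iso_inv Cfun_unitS _ unitS_fixed_alg]) (auto simp: fixed_alg_def)

lemma \<rho>_nonneg: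
  assumes h: "h \<in> fixed_alg S \<Phi>" and nonneg: "\<forall>x\<in>S. Im (h x) = 0 \<and> 0 \<le> Re (h x)"
  shows "Im (\<rho> h y) = 0 \<and> 0 \<le> Re (\<rho> h y)"
  using h nonneg
  by (intro star_iso_nonneg[OF iso h fixed_alg_sqrt_Re]) (auto simp: fixed_alg_def Cfun_def)

lemma \<rho>_inv_nonneg:
  assumes g: "g \<in> Cfun T" and nonneg: "\<forall>y\<in>T. Im (g y) = 0 \<and> 0 \<le> Re (g y)"
  shows "Im (\<rho>_inv g x) = 0 \<and> 0 \<le> Re (\<rho>_inv g x)"
  using g nonneg by (intro star_iso_nonneg[OF iso_inv g Cfun_sqrt_Re]) (auto simp: Cfun_def)

lemma \<rho>_cond_exp_Cfun: "h \<in> Cfun S \<Longrightarrow> \<rho> (cond_exp S \<Phi> h) \<in> Cfun T"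
  using iso cond_exp_fixed_alg_mem by (auto simp: star_iso_def bij_betw_def)

lemma invariant_state_pullback:
  assumes \<mu>: "is_state T \<mu>"
  shows "invariant_state S \<Phi> (state_pullback S (\<lambda>h. \<rho> (cond_exp S \<Phi> h)) \<mu>)"
proof -
  have "is_state S (state_pullback S (\<lambda>h. \<rho> (cond_exp S \<Phi> h)) \<mu>)"
  proof (rule is_state_pullback[OF \<mu> \<rho>_cond_exp_Cfun])
    fix h g assume "h \<in> Cfun S" "g \<in> Cfun S"
    then show "\<rho> (cond_exp S \<Phi> (\<lambda>x. h x + g x))
               = (\<lambda>y. \<rho> (cond_exp S \<Phi> h) y + \<rho> (cond_exp S \<Phi> g) y)"
      using iso cond_exp_fixed_alg_mem by (simp add: cond_exp_add star_iso_def)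
  next
    fix c h assume "h \<in> Cfun S"
    then show "\<rho> (cond_exp S \<Phi> (\<lambda>x. c * h x)) = (\<lambda>y. c * \<rho> (cond_exp S \<Phi> h) y)"
      using iso cond_exp_fixed_alg_mem by (simp add: cond_exp_cmult star_iso_def)
  next
    fix h y assume "h \<in> Cfun S" "\<forall>x\<in>S. Im (h x) = 0 \<and> 0 \<le> Re (h x)"
    then show "Im (\<rho> (cond_exp S \<Phi> h) y) = 0 \<and> 0 \<le> Re (\<rho> (cond_exp S \<Phi> h) y)"
      by (intro \<rho>_nonneg cond_exp_fixed_alg_mem ballI cond_exp_nonneg) auto
  next
    show "\<rho> (cond_exp S \<Phi> (unitS S)) = unitS T"
      by (simp add: cond_exp_fixed_alg[OF unitS_fixed_alg] \<rho>_unitS)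
  qed
  then show ?thesis
    by (simp add: invariant_state_def state_pullback_def koop_Cfun cond_exp_koop)
qed

lemma inj_on_state_pullback:
  "inj_on (state_pullback S (\<lambda>h. \<rho> (cond_exp S \<Phi> h))) {\<mu>. is_state T \<mu>}"
proof (rule inj_onI, rule ext)
  fix \<mu> \<nu> g
  assume \<mu>: "\<mu> \<in> {\<mu>. is_state T \<mu>}" and \<nu>: "\<nu> \<in> {\<mu>. is_state T \<mu>}"
    and eq: "state_pullback S (\<lambda>h. \<rho> (cond_exp S \<Phi> h)) \<mu> = state_pullback S (\<lambda>h. \<rho> (cond_exp S \<Phi> h)) \<nu>"
  show "\<mu> g = \<nu> g"
  proof (cases "g \<in> Cfun T")
    case True
    show ?thesis
      using \<rho>_inv_mem[OF True] \<rho>_\<rho>_inv[OF True] fun_cong[OF eq, of "\<rho>_inv g"]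
      by (simp add: state_pullback_def cond_exp_fixed_alg fixed_alg_def)
  next
    case False
    then show ?thesis using \<mu> \<nu> by (simp add: state_outside)
  qed
qed

text \<open>Every invariant state \<phi> is the pullback of its transport \<phi> \<circ> \<rho>_inv, because
  \<phi> = \<phi> \<circ> E and \<rho>_inv \<circ> \<rho> is the identity on the range of E.\<close>
lemma invariant_state_eq_pullback:
  assumes \<phi>: "invariant_state S \<Phi> \<phi>"
  shows "is_state T (state_pullback T \<rho>_inv \<phi>)"
    and "\<phi> = state_pullback S (\<lambda>h. \<rho> (cond_exp S \<Phi> h)) (state_pullback T \<rho>_inv \<phi>)"
proof -
  have st: "is_state S \<phi>" using \<phi> by (simp add: invariant_state_def)
  have inv_into: "\<rho>_inv g \<in> Cfun S" if "g \<in> Cfun T" for g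
    using \<rho>_inv_mem[OF that] by (simp add: fixed_alg_def)
  show "is_state T (state_pullback T \<rho>_inv \<phi>)"
  proof (rule is_state_pullback[OF st inv_into])
    show "\<rho>_inv (\<lambda>x. g x + g' x) = (\<lambda>y. \<rho>_inv g y + \<rho>_inv g' y)"
      if "g \<in> Cfun T" "g' \<in> Cfun T" for g g'
      using that iso_inv by (simp add: star_iso_def)
    show "\<rho>_inv (\<lambda>x. c * g x) = (\<lambda>y. c * \<rho>_inv g y)" if "g \<in> Cfun T" for c g
      using that iso_inv by (simp add: star_iso_def)
  qed (use \<rho>_inv_nonneg \<rho>_inv_unitS in auto)
  show "\<phi> = state_pullback S (\<lambda>h. \<rho> (cond_exp S \<Phi> h)) (state_pullback T \<rho>_inv \<phi>)"
  proof
    fix h show "\<phi> h = state_pullback S (\<lambda>h. \<rho> (cond_exp S \<Phi> h)) (state_pullback T \<rho>_inv \<phi>) h"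
    proof (cases "h \<in> Cfun S")
      case True
      show ?thesis
        using True \<rho>_inv_\<rho>[OF cond_exp_fixed_alg_mem[OF True]] \<rho>_cond_exp_Cfun[OF True]
          invariant_state_cond_exp[OF \<phi> True]
        by (simp add: state_pullback_def)
    next
      case False
      then show ?thesis by (simp add: state_pullback_def state_outside[OF st])
    qed
  qed
qed

lemma bij_betw_state_pullback:
  "bij_betw (state_pullback S (\<lambda>h. \<rho> (cond_exp S \<Phi> h)))
     {\<mu>. is_state T \<mu>} {\<phi>. invariant_state S \<Phi> \<phi>}"
  unfolding bij_betw_def
proof (intro conjI inj_on_state_pullback equalityI subsetI)
  show "\<phi> \<in> {\<phi>. invariant_state S \<Phi> \<phi>}"
    if "\<phi> \<in> state_pullback S (\<lambda>h. \<rho> (cond_exp S \<Phi> h)) ` {\<mu>. is_state T \<mu>}" for \<phi>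
    using that invariant_state_pullback by blast
  show "\<phi> \<in> state_pullback S (\<lambda>h. \<rho> (cond_exp S \<Phi> h)) ` {\<mu>. is_state T \<mu>}"
    if "\<phi> \<in> {\<phi>. invariant_state S \<Phi> \<phi>}" for \<phi>
    using that invariant_state_eq_pullback by blast
qed

end

theorem mainTheorem19:
  fixes \<theta> :: "'a::t2_space \<Rightarrow> 'a" and f :: "'a \<Rightarrow> complex"
    and \<rho> :: "('a \<times> complex \<Rightarrow> complex) \<Rightarrow> (complex \<Rightarrow> complex)"
  assumes cpt: "compact (UNIV :: 'a set)"
    and homeo: "\<exists>\<theta>'. homeomorphism UNIV UNIV \<theta> \<theta>'"
    and ue: "uniquely_ergodic (UNIV :: 'a set) \<theta>"
    and f_cont: "continuous_on UNIV f"
    and f_circ: "\<forall>x. f x \<in> sphere 0 1"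
    and ue_fix: "UE_fixed (UNIV \<times> sphere 0 1) (\<lambda>(x, w). (\<theta> x, f x * w))"
    and nontriv: "\<exists>h\<in>fixed_alg (UNIV \<times> sphere 0 1) (\<lambda>(x, w). (\<theta> x, f x * w)).
                    \<exists>p\<in>UNIV \<times> sphere 0 1. \<exists>q\<in>UNIV \<times> sphere 0 1. h p \<noteq> h q"
    and iso: "star_iso (fixed_alg (UNIV \<times> sphere 0 1) (\<lambda>(x, w). (\<theta> x, f x * w)))
                (Cfun (sphere 0 1)) \<rho>"
  shows "let S = UNIV \<times> sphere (0::complex) 1;
             \<Phi> = (\<lambda>(x, w). (\<theta> x, f x * w));
             T = (\<lambda>\<mu> h. if h \<in> Cfun S then \<mu> (\<rho> (cond_exp S \<Phi> h)) else 0)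
         in affine_states {\<mu>. is_state (sphere 0 1) \<mu>} T \<and>
            bij_betw T {\<mu>. is_state (sphere 0 1) \<mu>} {\<phi>. invariant_state S \<Phi> \<phi>}"
proof -
  define S where "S = (UNIV :: 'a set) \<times> sphere (0::complex) 1"
  define \<Phi> where "\<Phi> = (\<lambda>(x::'a, w::complex). (\<theta> x, f x * w))"
  have "continuous_on UNIV \<theta>" using homeo by (auto simp: homeomorphism_def)
  then have "continuous_on UNIV (\<lambda>p. (\<theta> (fst p), f (fst p) * snd p))"
    by (intro continuous_intros continuous_on_compose2[OF \<open>continuous_on UNIV \<theta>\<close>]
        continuous_on_compose2[OF f_cont]) auto
  moreover have "\<Phi> = (\<lambda>p. (\<theta> (fst p), f (fst p) * snd p))" by (auto simp: \<Phi>_def)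
  ultimately have "continuous_on S \<Phi>" by (metis continuous_on_subset subset_UNIV)
  moreover have "\<Phi> ` S \<subseteq> S" using f_circ by (auto simp: S_def \<Phi>_def norm_mult)
  moreover have "compact S" unfolding S_def by (intro compact_Times cpt compact_sphere)
  ultimately interpret ue_fixed_iso S \<Phi> "sphere 0 1" \<rho>
    using ue_fix iso by unfold_locales (simp_all add: S_def \<Phi>_def)
  have "affine_states {\<mu>. is_state (sphere 0 1) \<mu>} (state_pullback S (\<lambda>h. \<rho> (cond_exp S \<Phi> h)))"
    by (auto simp: affine_states_def state_pullback_def fun_eq_iff)
  with bij_betw_state_pullback show ?thesis
    unfolding state_pullback_def[abs_def] S_def \<Phi>_def Let_def by blast
qed

end
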